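(* Let $\gamma$ be a norm on $\mathbb{R}^d$, let $D\subset\mathbb{R}^d$ be finite with positive weights $w_d$, and $w_D=\sum_{d\in D}w_d$. Then for every $m\in\mathrm{EH}_\gamma(D)$ there exist $c\in\mathbb{R}^d$ and $w_c\in(0,w_D)$ such that $m$ is a Fermat–Weber point of the weighted set $(D,w)+(c,w_c)$.
   Context: A norm is a symmetric gauge: the Minkowski functional $\gamma$ of a convex compact set $B_\gamma$, symmetric about and containing the origin in its interior. $\gamma^\circ$ is the dual norm, $B_{\gamma^\circ}$ its unit ball. A Fermat–Weber point of a finite positively weighted set $(S,u)$ is a minimizer of $x\mapsto\sum_{s\in S}u_s\gamma(x-s)$. For weighted sets, $(D,w)+(C,v)$ denotes the weighted set $D\cup C$ with weight $w_x+v_x$ at $x$ (where $w_x=0$ for $x\notin D$ and $v_x=0$ for $x\notin C$). For $p\in B_{\gamma^\circ}$: if $\gamma^\circ(p)=1$, $N(p)$ is the cone $\mathbb{R}_{\ge0}F(p)$ generated by the exposed face $F(p)=\{x\in B_\gamma:\langle p,x\rangle=1\}$; if $\gamma^\circ(p)<1$, $N(p)=\{0\}$. For finite $S$ and $\pi=(p_s)_{s\in S}\subset B_{\gamma^\circ}$, $C_\pi=\bigcap_{s\in S}(s+N(p_s))$; a nonempty $C_\pi$ is an elementary convex set for $S$. The elementary hull $\mathrm{EH}_\gamma(S)$ is the union of all bounded elementary convex sets for $S$. *)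

theory Defs
  imports "HOL-Analysis.Analysis"
begin

definition norm_ball :: "'a::euclidean_space set \<Rightarrow> bool" where
  "norm_ball B \<longleftrightarrow> convex B \<and> compact B \<and> 0 \<in> interior B \<and> (\<forall>x\<in>B. - x \<in> B)"

definition mink :: "'a::euclidean_space set \<Rightarrow> 'a \<Rightarrow> real" where
  "mink B x = Inf {t. 0 < t \<and> x \<in> (\<lambda>y. t *\<^sub>R y) ` B}"

definition dual_mink :: "'a::euclidean_space set \<Rightarrow> 'a \<Rightarrow> real" where
  "dual_mink B p = Sup ((\<lambda>x. p \<bullet> x) ` B)"

definition dual_ball :: "'a::euclidean_space set \<Rightarrow> 'a set" where
  "dual_ball B = {p. dual_mink B p \<le> 1}"

definition exposed_face :: "'a::euclidean_space set \<Rightarrow> 'a \<Rightarrow> 'a set" where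
  "exposed_face B p = {x\<in>B. p \<bullet> x = 1}"

definition Ncone :: "'a::euclidean_space set \<Rightarrow> 'a \<Rightarrow> 'a set" where
  "Ncone B p = (if dual_mink B p = 1
      then {t *\<^sub>R x | t x. 0 \<le> t \<and> x \<in> exposed_face B p} else {0})"

definition elem_set :: "'a::euclidean_space set \<Rightarrow> 'a set \<Rightarrow> ('a \<Rightarrow> 'a) \<Rightarrow> 'a set" where
  "elem_set B S \<pi> = (\<Inter>s\<in>S. (\<lambda>y. s + y) ` Ncone B (\<pi> s))"

definition elementary_hull :: "'a::euclidean_space set \<Rightarrow> 'a set \<Rightarrow> 'a set" where
  "elementary_hull B S = \<Union>{elem_set B S \<pi> | \<pi>. (\<forall>s\<in>S. \<pi> s \<in> dual_ball B)
      \<and> elem_set B S \<pi> \<noteq> {} \<and> bounded (elem_set B S \<pi>)}"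

definition fermat_weber_point ::
  "'a::euclidean_space set \<Rightarrow> 'a set \<Rightarrow> ('a \<Rightarrow> real) \<Rightarrow> 'a \<Rightarrow> bool" where
  "fermat_weber_point B S u x \<longleftrightarrow>
     (\<forall>y. (\<Sum>s\<in>S. u s * mink B (x - s)) \<le> (\<Sum>s\<in>S. u s * mink B (y - s)))"

end

theory Submission
  imports Defs
begin

text \<open>Take \<open>c = m\<close>. If \<open>m \<in> C\<^sub>\<pi>\<close>, each \<open>p\<^sub>s\<close> is a subgradient of \<open>\<gamma>(\<cdot> - s)\<close> at \<open>m\<close>, so \<open>m\<close> is a
  Fermat--Weber point of \<open>(D,w) + (m,w\<^sub>c)\<close> as soon as \<open>\<gamma>\<degree>(q) \<le> w\<^sub>c\<close>, where \<open>q = \<Sum> w\<^sub>s p\<^sub>s\<close>.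
  Boundedness of \<open>C\<^sub>\<pi>\<close> forces \<open>\<gamma>\<degree>(q) < w\<^sub>D\<close>: otherwise a point \<open>x\<close> of the unit ball
  maximizing \<open>\<langle>q, \<cdot>\<rangle>\<close> lies in every face \<open>F(p\<^sub>s)\<close>, and the ray \<open>m + \<real>\<^sub>\<ge>\<^sub>0 x\<close> stays in \<open>C\<^sub>\<pi>\<close>.\<close>

lemma norm_ball_zero_mem: "norm_ball B \<Longrightarrow> 0 \<in> B"
  unfolding norm_ball_def using interior_subset by blast

lemma norm_ball_absorbing:
  assumes "norm_ball B"
  shows "\<exists>t>0. x \<in> (\<lambda>y. t *\<^sub>R y) ` B"
proof -
  obtain e where e: "e > 0" "ball 0 e \<subseteq> B"
    using assms unfolding norm_ball_def mem_interior by blast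
  define t where "t = 2 * norm x / e + 1"
  have t: "t > 0" using e by (simp add: t_def add_nonneg_pos)
  have "e * t = 2 * norm x + e" using e by (simp add: t_def field_simps)
  then have "norm x < e * t" using e norm_ge_zero[of x] by linarith
  hence "(1/t) *\<^sub>R x \<in> B" using t e by (auto simp: field_simps)
  moreover have "x = t *\<^sub>R ((1/t) *\<^sub>R x)" using t by simp
  ultimately show ?thesis using t by blast
qed

lemma mink_nonneg: "norm_ball B \<Longrightarrow> 0 \<le> mink B x"
  unfolding mink_def using norm_ball_absorbing[of B x] by (intro cInf_greatest) auto

lemma mink_le:
  assumes "norm_ball B" "0 \<le> t" "x \<in> (\<lambda>y. t *\<^sub>R y) ` B"
  shows "mink B x \<le> t"
proof -
  have le: "mink B x \<le> e" if "e > 0" "x \<in> (\<lambda>y. e *\<^sub>R y) ` B" for e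
    unfolding mink_def using that by (intro cInf_lower) (auto intro!: bdd_belowI[where m=0])
  show ?thesis
  proof (cases "t = 0")
    case True
    then have "x = 0" using assms(3) by auto
    then have mem: "x \<in> (\<lambda>y. e *\<^sub>R y) ` B" for e
      using norm_ball_zero_mem[OF assms(1)] by (auto intro: image_eqI[of _ _ 0])
    show ?thesis
    proof (rule field_le_epsilon)
      fix e :: real assume "0 < e"
      then show "mink B x \<le> t + e" using le[OF _ mem] True by simp
    qed
  next
    case False
    then show ?thesis using le assms(2,3) by simp
  qed
qed

lemma mink_zero: "norm_ball B \<Longrightarrow> mink B 0 = 0"
  using mink_le[of B 0 0] mink_nonneg[of B 0] norm_ball_zero_mem[of B] by force

lemma inner_le_dual_mink:
  assumes "norm_ball B" "x \<in> B"
  shows "p \<bullet> x \<le> dual_mink B p"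
proof -
  have "bounded B" using assms(1) unfolding norm_ball_def by (simp add: compact_imp_bounded)
  then obtain R where R: "\<forall>x\<in>B. norm x \<le> R" unfolding bounded_iff by blast
  have "p \<bullet> y \<le> norm p * R" if "y \<in> B" for y
    using norm_cauchy_schwarz[of p y] mult_left_mono[OF R[rule_format, OF that] norm_ge_zero[of p]]
    by linarith
  then have "bdd_above ((\<lambda>x. p \<bullet> x) ` B)" by (intro bdd_aboveI[where M="norm p * R"]) auto
  then show ?thesis unfolding dual_mink_def using assms(2) by (simp add: cSup_upper)
qed

lemma dual_mink_nonneg: "norm_ball B \<Longrightarrow> 0 \<le> dual_mink B p"
  using inner_le_dual_mink[of B 0 p] norm_ball_zero_mem[of B] by simp

lemma dual_mink_attained:
  assumes "norm_ball B"
  obtains x where "x \<in> B" "p \<bullet> x = dual_mink B p"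
proof -
  have "compact ((\<lambda>x. p \<bullet> x) ` B)"
    using assms unfolding norm_ball_def
    by (intro compact_continuous_image) (auto intro!: continuous_intros)
  moreover have "(\<lambda>x. p \<bullet> x) ` B \<noteq> {}" using norm_ball_zero_mem[OF assms] by auto
  ultimately obtain r where r: "r \<in> (\<lambda>x. p \<bullet> x) ` B" "\<forall>u\<in>(\<lambda>x. p \<bullet> x) ` B. u \<le> r"
    using compact_attains_sup by blast
  have "dual_mink B p = r"
    unfolding dual_mink_def using r by (intro cSup_eq_maximum) auto
  moreover obtain x where "x \<in> B" "r = p \<bullet> x" using r(1) by blast
  ultimately show ?thesis using that by simp
qed

lemma dual_mink_uminus:
  assumes "norm_ball B"
  shows "dual_mink B (- p) = dual_mink B p"
proof -
  have neg: "- x \<in> B" if "x \<in> B" for x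
    using assms that unfolding norm_ball_def by blast
  have "B \<subseteq> uminus ` B"
  proof
    fix x assume "x \<in> B"
    then show "x \<in> uminus ` B" using neg[of x] by (intro image_eqI[of x uminus "- x"]) auto
  qed
  then have "uminus ` B = B" using neg by blast
  moreover have "(\<lambda>x. (- p) \<bullet> x) ` B = (\<lambda>x. p \<bullet> x) ` (uminus ` B)"
    by (simp add: image_image)
  ultimately show ?thesis unfolding dual_mink_def by simp
qed

lemma inner_le_dual_mink_mult_mink:
  assumes "norm_ball B"
  shows "p \<bullet> x \<le> dual_mink B p * mink B x"
proof -
  let ?S = "{t. 0 < t \<and> x \<in> (\<lambda>y. t *\<^sub>R y) ` B}"
  have ne: "?S \<noteq> {}" using norm_ball_absorbing[OF assms, of x] by auto
  have bound: "p \<bullet> x \<le> dual_mink B p * t" if "t \<in> ?S" for t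
  proof -
    from that obtain y where y: "y \<in> B" "x = t *\<^sub>R y" "t > 0" by auto
    then have "p \<bullet> x = t * (p \<bullet> y)" by simp
    also have "\<dots> \<le> t * dual_mink B p"
      using inner_le_dual_mink[OF assms y(1)] y(3) by (simp add: mult_left_mono)
    finally show ?thesis by (simp add: mult.commute)
  qed
  show ?thesis
  proof (cases "dual_mink B p = 0")
    case True
    then show ?thesis using bound ne by fastforce
  next
    case False
    hence dp: "dual_mink B p > 0" using dual_mink_nonneg[OF assms, of p] by simp
    have "p \<bullet> x / dual_mink B p \<le> Inf ?S"
      using bound dp by (intro cInf_greatest[OF ne]) (simp add: divide_le_eq mult.commute)
    then show ?thesis using dp unfolding mink_def by (simp add: divide_le_eq mult.commute)
  qed
qed

lemma inner_le_mink:
  assumes "norm_ball B" "p \<in> dual_ball B"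
  shows "p \<bullet> x \<le> mink B x"
proof -
  have "p \<bullet> x \<le> dual_mink B p * mink B x" by (rule inner_le_dual_mink_mult_mink[OF assms(1)])
  also have "\<dots> \<le> mink B x"
    using assms mink_nonneg[OF assms(1), of x] mult_right_mono[of "dual_mink B p" 1 "mink B x"]
    unfolding dual_ball_def by simp
  finally show ?thesis .
qed

lemma mink_le_inner_if_Ncone:
  assumes "norm_ball B" "v \<in> Ncone B p"
  shows "mink B v \<le> p \<bullet> v"
proof (cases "dual_mink B p = 1")
  case True
  then obtain t x where "0 \<le> t" "x \<in> B" "p \<bullet> x = 1" "v = t *\<^sub>R x"
    using assms(2) unfolding Ncone_def exposed_face_def by auto
  then show ?thesis using mink_le[OF assms(1)] by auto
next
  case False
  then show ?thesis using assms(2) mink_zero[OF assms(1)] unfolding Ncone_def by simp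
qed

lemma convex_exposed_face:
  assumes "convex B"
  shows "convex (exposed_face B p)"
proof -
  have "exposed_face B p = B \<inter> {x. p \<bullet> x = 1}" unfolding exposed_face_def by auto
  then show ?thesis using assms by (simp add: convex_Int convex_hyperplane)
qed

lemma Ncone_add_exposed_face:
  assumes "convex B" "dual_mink B p = 1" "v \<in> Ncone B p" "x \<in> exposed_face B p" "0 \<le> t"
  shows "v + t *\<^sub>R x \<in> Ncone B p"
proof -
  obtain a y where ay: "0 \<le> a" "y \<in> exposed_face B p" "v = a *\<^sub>R y"
    using assms(2,3) unfolding Ncone_def by auto
  show ?thesis
  proof (cases "a + t = 0")
    case True
    then have "a = 0" "t = 0" using ay(1) assms(5) by auto
    then have "v + t *\<^sub>R x = 0 *\<^sub>R y" using ay(3) by simp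
    then show ?thesis using ay(2) unfolding Ncone_def if_P[OF assms(2)] by blast
  next
    case False
    then have at: "a + t > 0" using ay(1) assms(5) by auto
    define z where "z = (a / (a + t)) *\<^sub>R y + (t / (a + t)) *\<^sub>R x"
    have "z \<in> exposed_face B p"
      unfolding z_def using ay assms(4,5) at
      by (intro convexD[OF convex_exposed_face[OF assms(1)]])
        (auto simp: add_divide_distrib[symmetric])
    moreover have "v + t *\<^sub>R x = (a + t) *\<^sub>R z"
      unfolding z_def ay(3) using at by (simp add: scaleR_add_right)
    ultimately show ?thesis using assms(2) at unfolding Ncone_def by force
  qed
qed

lemma mem_elem_set_iff: "m \<in> elem_set B S \<pi> \<longleftrightarrow> (\<forall>s\<in>S. m - s \<in> Ncone B (\<pi> s))"
proof -
  have "m \<in> (\<lambda>y. s + y) ` N \<longleftrightarrow> m - s \<in> N" for s and N :: "'a set"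
    by (auto intro: image_eqI[of _ _ "m - s"])
  then show ?thesis unfolding elem_set_def by simp
qed

lemma elem_set_add_common_face:
  assumes "convex B" "m \<in> elem_set B S \<pi>" "0 \<le> t"
    and "\<forall>s\<in>S. dual_mink B (\<pi> s) = 1 \<and> x \<in> exposed_face B (\<pi> s)"
  shows "m + t *\<^sub>R x \<in> elem_set B S \<pi>"
proof -
  have "m - s + t *\<^sub>R x \<in> Ncone B (\<pi> s)" if "s \<in> S" for s
    using assms that unfolding mem_elem_set_iff by (intro Ncone_add_exposed_face) auto
  then show ?thesis unfolding mem_elem_set_iff by (simp add: algebra_simps)
qed

lemma bounded_ray_imp_zero:
  fixes m x :: "'a::real_normed_vector"
  assumes "bounded A" "\<forall>t\<ge>0. m + t *\<^sub>R x \<in> A"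
  shows "x = 0"
proof (rule ccontr)
  assume "x \<noteq> 0"
  then have nx: "norm x > 0" by simp
  obtain M where M: "\<forall>z\<in>A. norm z \<le> M" using assms(1) unfolding bounded_iff by blast
  have "norm m \<le> M" using M assms(2) by (metis order_refl add_0_right scaleR_zero_left)
  define t where "t = (norm m + M + 1) / norm x"
  have t: "t \<ge> 0"
    unfolding t_def using nx \<open>norm m \<le> M\<close> norm_ge_zero[of m]
    by (intro divide_nonneg_pos) linarith+
  then have "norm (t *\<^sub>R x) = t * norm x" by simp
  also have "\<dots> = norm m + M + 1" unfolding t_def using nx by simp
  finally have "norm (t *\<^sub>R x) = norm m + M + 1" .
  moreover have "norm (t *\<^sub>R x) \<le> norm (m + t *\<^sub>R x) + norm m"
    using norm_triangle_ineq4[of "m + t *\<^sub>R x" m] by simp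
  moreover have "norm (m + t *\<^sub>R x) \<le> M" using M assms(2) t by blast
  ultimately show False by linarith
qed

lemma dual_mink_weighted_sum_less:
  assumes "norm_ball B" "finite S" "\<forall>s\<in>S. 0 < w s" "\<forall>s\<in>S. \<pi> s \<in> dual_ball B"
    and "m \<in> elem_set B S \<pi>" "bounded (elem_set B S \<pi>)"
  shows "dual_mink B (\<Sum>s\<in>S. w s *\<^sub>R \<pi> s) < (\<Sum>s\<in>S. w s)"
proof (rule ccontr)
  define q where "q = (\<Sum>s\<in>S. w s *\<^sub>R \<pi> s)"
  assume "\<not> dual_mink B q < (\<Sum>s\<in>S. w s)"
  moreover obtain x where x: "x \<in> B" "q \<bullet> x = dual_mink B q"
    using dual_mink_attained[OF assms(1)] by blast
  ultimately have sum_le: "(\<Sum>s\<in>S. w s * (1 - \<pi> s \<bullet> x)) \<le> 0"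
    unfolding q_def by (simp add: inner_sum_left sum_subtractf right_diff_distrib)
  have le1: "\<pi> s \<bullet> x \<le> 1" and dual_le1: "dual_mink B (\<pi> s) \<le> 1" if "s \<in> S" for s
    using that assms(4) inner_le_dual_mink[OF assms(1) x(1), of "\<pi> s"]
    unfolding dual_ball_def by auto
  have terms_nonneg: "\<forall>s\<in>S. 0 \<le> w s * (1 - \<pi> s \<bullet> x)"
    using le1 assms(3) by (simp add: less_imp_le)
  then have "(\<Sum>s\<in>S. w s * (1 - \<pi> s \<bullet> x)) = 0"
    using sum_le sum_nonneg[of S "\<lambda>s. w s * (1 - \<pi> s \<bullet> x)"] by simp
  then have "\<forall>s\<in>S. w s * (1 - \<pi> s \<bullet> x) = 0"
    using terms_nonneg by (subst (asm) sum_nonneg_eq_0_iff[OF assms(2)]) auto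
  then have face: "\<pi> s \<bullet> x = 1" if "s \<in> S" for s
    using that assms(3) by force
  have "dual_mink B (\<pi> s) = 1" if "s \<in> S" for s
    using face[OF that] dual_le1[OF that] inner_le_dual_mink[OF assms(1) x(1), of "\<pi> s"]
    by linarith
  then have common_face: "\<forall>s\<in>S. dual_mink B (\<pi> s) = 1 \<and> x \<in> exposed_face B (\<pi> s)"
    using face x(1) unfolding exposed_face_def by blast
  have "S \<noteq> {}"
  proof
    assume "S = {}"
    then have "elem_set B S \<pi> = UNIV" unfolding elem_set_def by simp
    then show False using assms(6) by simp
  qed
  then have "x \<noteq> 0" using face by auto
  moreover have "\<forall>t\<ge>0. m + t *\<^sub>R x \<in> elem_set B S \<pi>"
    using assms(1) elem_set_add_common_face[OF _ assms(5) _ common_face]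
    unfolding norm_ball_def by blast
  ultimately show False using bounded_ray_imp_zero[OF assms(6)] by blast
qed

lemma sum_insert_weights:
  assumes "finite D"
  shows "(\<Sum>x\<in>insert c D. ((if x \<in> D then w x else 0) + (if x = c then wc else 0)) * g x)
      = (\<Sum>d\<in>D. w d * g d) + wc * (g c :: real)"
proof (cases "c \<in> D")
  case True
  then have "(\<Sum>x\<in>D. ((if x \<in> D then w x else 0) + (if x = c then wc else 0)) * g x)
      = (\<Sum>x\<in>D. w x * g x + (if x = c then wc * g x else 0))"
    by (intro sum.cong) (auto simp: distrib_right)
  with True assms show ?thesis by (simp add: sum.distrib insert_absorb)
next
  case False
  then have "(\<Sum>x\<in>D. ((if x \<in> D then w x else 0) + (if x = c then wc else 0)) * g x)
      = (\<Sum>d\<in>D. w d * g d)"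
    by (intro sum.cong) auto
  with False assms show ?thesis by simp
qed

lemma fermat_weber_point_elem_set:
  assumes "norm_ball B" "finite D" "\<forall>s\<in>D. 0 \<le> w s" "\<forall>s\<in>D. \<pi> s \<in> dual_ball B"
    and "m \<in> elem_set B D \<pi>" "dual_mink B (\<Sum>s\<in>D. w s *\<^sub>R \<pi> s) \<le> wc"
  shows "fermat_weber_point B (insert m D)
      (\<lambda>x. (if x \<in> D then w x else 0) + (if x = m then wc else 0)) m"
  unfolding fermat_weber_point_def sum_insert_weights[OF assms(2)]
proof
  fix y
  define q where "q = (\<Sum>s\<in>D. w s *\<^sub>R \<pi> s)"
  have "(\<Sum>s\<in>D. w s * mink B (m - s)) + wc * mink B (m - m) = (\<Sum>s\<in>D. w s * mink B (m - s))"
    using mink_zero[OF assms(1)] by simp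
  also have "\<dots> \<le> (\<Sum>s\<in>D. w s * (\<pi> s \<bullet> (m - s)))"
    using assms(3,5) unfolding mem_elem_set_iff
    by (intro sum_mono mult_left_mono mink_le_inner_if_Ncone[OF assms(1)]) auto
  also have "\<dots> = (\<Sum>s\<in>D. w s * (\<pi> s \<bullet> (y - s))) + (- q) \<bullet> (y - m)"
    unfolding q_def
    by (simp add: inner_sum_left inner_diff_right algebra_simps sum.distrib sum_subtractf)
  also have "\<dots> \<le> (\<Sum>s\<in>D. w s * mink B (y - s)) + wc * mink B (y - m)"
  proof (rule add_mono)
    show "(\<Sum>s\<in>D. w s * (\<pi> s \<bullet> (y - s))) \<le> (\<Sum>s\<in>D. w s * mink B (y - s))"
      using assms(3,4) by (intro sum_mono mult_left_mono inner_le_mink[OF assms(1)]) auto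
    have "(- q) \<bullet> (y - m) \<le> dual_mink B q * mink B (y - m)"
      using inner_le_dual_mink_mult_mink[OF assms(1)] dual_mink_uminus[OF assms(1)] by metis
    also have "\<dots> \<le> wc * mink B (y - m)"
      using assms(6) mink_nonneg[OF assms(1)] unfolding q_def by (simp add: mult_right_mono)
    finally show "(- q) \<bullet> (y - m) \<le> wc * mink B (y - m)" .
  qed
  finally show "(\<Sum>s\<in>D. w s * mink B (m - s)) + wc * mink B (m - m)
      \<le> (\<Sum>s\<in>D. w s * mink B (y - s)) + wc * mink B (y - m)" .
qed

theorem mainTheorem11:
  fixes B :: "'a::euclidean_space set" and D :: "'a set" and w :: "'a \<Rightarrow> real" and m :: 'a
  assumes "norm_ball B" and "finite D" and "\<forall>d\<in>D. 0 < w d"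
    and "m \<in> elementary_hull B D"
  shows "\<exists>c wc. 0 < wc \<and> wc < (\<Sum>d\<in>D. w d) \<and>
    fermat_weber_point B (insert c D)
      (\<lambda>x. (if x \<in> D then w x else 0) + (if x = c then wc else 0)) m"
proof -
  from assms(4) obtain \<pi> where \<pi>: "\<forall>s\<in>D. \<pi> s \<in> dual_ball B" "m \<in> elem_set B D \<pi>"
      "bounded (elem_set B D \<pi>)"
    unfolding elementary_hull_def by blast
  define r where "r = dual_mink B (\<Sum>s\<in>D. w s *\<^sub>R \<pi> s)"
  have r: "0 \<le> r" "r < (\<Sum>d\<in>D. w d)"
    unfolding r_def using dual_mink_nonneg[OF assms(1)]
      dual_mink_weighted_sum_less[OF assms(1-3) \<pi>] by auto
  define wc where "wc = (r + (\<Sum>d\<in>D. w d)) / 2"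
  have "fermat_weber_point B (insert m D)
      (\<lambda>x. (if x \<in> D then w x else 0) + (if x = m then wc else 0)) m"
    using assms(1-3) \<pi>(1,2) r unfolding r_def wc_def
    by (intro fermat_weber_point_elem_set) auto
  moreover have "0 < wc" "wc < (\<Sum>d\<in>D. w d)" using r unfolding wc_def by auto
  ultimately show ?thesis by blast
qed

end
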